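(* Let $S$ be a measurement scenario, $n\ge1$, and $F\colon\mathrm{Emp}(S)\to\mathrm{Emp}(\mathbf n)$ a function preserving convex combinations. Identify $\mathrm{Emp}(\mathbf n)$ with the set of probability distributions on $\{0,\dots,n-1\}$. Then $F$ is induced by a probabilistic procedure $S\to\mathbf n$ (i.e. $F=\mathrm{Emp}(f)$ for some probabilistic procedure $f$) if and only if there exist reals $r_1,\dots,r_m>0$ with $\sum_jr_j=1$ and functions $F_j\colon\mathcal E_S(X_S)\to\{0,\dots,n-1\}$ such that $F(\delta_s)=\sum_jr_j\delta_{F_j(s)}$ for all $s\in\mathcal E_S(X_S)$ and, for each $j$, the least subset $U_j\subseteq X_S$ such that $F_j$ factors through $\mathcal E_S(U_j)$ belongs to $\Sigma_S$.
   Context: A simplicial complex $\Sigma$ on a finite set $X$ is a family of subsets containing $\emptyset$ and all singletons, closed under subsets. A measurement scenario $S=(X_S,O_S,\Sigma_S)$: finite set $X_S$, finite non-empty outcome sets $O_{S,x}$, simplicial complex $\Sigma_S$ of contexts. $\mathcal E_S(U)=\prod_{x\in U}O_{S,x}$, restriction $s|_V$. An empirical model on $S$ is a family $(e_\sigma)_{\sigma\in\Sigma_S}$ of probability distributions on $\mathcal E_S(\sigma)$ with $e_\tau$ the marginal of $e_\sigma$ whenever $\tau\subseteq\sigma$; $\mathrm{Emp}(S)$ is the convex set of these; $\delta_s$ ($s\in\mathcal E_S(X_S)$) is the model with $(\delta_s)_\sigma$ the point mass at $s|_\sigma$. $\mathbf n$ is the scenario with one measurement $*$ and outcomes $\{0,\dots,n-1\}$;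 $\delta_k$ is the point mass at $k$. $F_j$ factors through $\mathcal E_S(U)$ if $F_j(s)=\tilde F(s|_U)$ for some $\tilde F$ and all $s$ (a least such $U$ always exists). A simplicial relation from $\Sigma$ (on $X$) to $\Delta$ (on $Y$) is a relation $R\subseteq X\times Y$ with $R(\sigma)\in\Delta$ for all $\sigma\in\Sigma$. A deterministic procedure $f\colon S\to T$ is a pair $(\pi_f,\alpha_f)$ with $\pi_f$ a simplicial relation from $\Sigma_T$ to $\Sigma_S$ and $\alpha_{f,x}\colon\mathcal E_S(\pi_f(x))\to O_{T,x}$; it acts by $(\mathrm{Emp}(f)e)_\sigma=(\alpha_{f,\sigma})_*(e_{\pi_f(\sigma)})$ with $\alpha_{f,\sigma}(s)=(\alpha_{f,x}(s|_{\pi_f(x)}))_{x\in\sigma}$. A probabilistic procedure is a finitely supported probability distribution $\sum_ir_if_i$ on deterministic procedures, acting by $\mathrm{Emp}(\sum r_if_i)e=\sum r_i\mathrm{Emp}(f_i)e$. *)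

theory Defs
  imports Complex_Main "HOL-Library.FuncSet"
begin

text \<open>Sections over U are the extensional functions in PiE U Out; restriction is restrict.\<close>

definition simplicial_complex :: "'x set \<Rightarrow> 'x set set \<Rightarrow> bool" where
  "simplicial_complex X Sig \<longleftrightarrow>
     Sig \<subseteq> Pow X \<and> {} \<in> Sig \<and> (\<forall>x\<in>X. {x} \<in> Sig) \<and>
     (\<forall>\<sigma>\<in>Sig. \<forall>\<tau>. \<tau> \<subseteq> \<sigma> \<longrightarrow> \<tau> \<in> Sig)"

definition scenario :: "'x set \<Rightarrow> ('x \<Rightarrow> 'o set) \<Rightarrow> 'x set set \<Rightarrow> bool" where
  "scenario X Out Sig \<longleftrightarrow> finite X \<and> (\<forall>x\<in>X. finite (Out x) \<and> Out x \<noteq> {}) \<and>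
     simplicial_complex X Sig"

text \<open>Empirical models, represented canonically: e \<sigma> is a probability mass function
on the sections over \<sigma> (zero elsewhere), and e \<sigma> = 0 for non-contexts \<sigma>.\<close>

definition emp_model :: "'x set \<Rightarrow> ('x \<Rightarrow> 'o set) \<Rightarrow> 'x set set \<Rightarrow>
    ('x set \<Rightarrow> ('x \<Rightarrow> 'o) \<Rightarrow> real) \<Rightarrow> bool" where
  "emp_model X Out Sig e \<longleftrightarrow>
     (\<forall>\<sigma> s. \<sigma> \<notin> Sig \<longrightarrow> e \<sigma> s = 0) \<and>
     (\<forall>\<sigma>\<in>Sig. (\<forall>s. s \<notin> PiE \<sigma> Out \<longrightarrow> e \<sigma> s = 0) \<and>
               (\<forall>s\<in>PiE \<sigma> Out. 0 \<le> e \<sigma> s) \<and>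
               sum (e \<sigma>) (PiE \<sigma> Out) = 1) \<and>
     (\<forall>\<sigma>\<in>Sig. \<forall>\<tau>. \<tau> \<subseteq> \<sigma> \<longrightarrow>
        (\<forall>t\<in>PiE \<tau> Out. e \<tau> t = sum (e \<sigma>) {s \<in> PiE \<sigma> Out. restrict s \<tau> = t}))"

definition delta_model :: "'x set set \<Rightarrow> ('x \<Rightarrow> 'o) \<Rightarrow> 'x set \<Rightarrow> ('x \<Rightarrow> 'o) \<Rightarrow> real" where
  "delta_model Sig s = (\<lambda>\<sigma> t. if \<sigma> \<in> Sig \<and> t = restrict s \<sigma> then 1 else 0)"

text \<open>Deterministic procedures S \<rightarrow> T: a simplicial relation \<pi> from Sig_T to Sig_S
(as a set of pairs in X_T \<times> X_S) and maps \<alpha> x : E_S(\<pi>(x)) \<rightarrow> O_T x.\<close>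

definition det_proc :: "'x set \<Rightarrow> ('x \<Rightarrow> 'o set) \<Rightarrow> 'x set set \<Rightarrow>
    'y set \<Rightarrow> ('y \<Rightarrow> 'p set) \<Rightarrow> 'y set set \<Rightarrow>
    ('y \<times> 'x) set \<Rightarrow> ('y \<Rightarrow> ('x \<Rightarrow> 'o) \<Rightarrow> 'p) \<Rightarrow> bool" where
  "det_proc XS OS SigS XT OT SigT \<pi> \<alpha> \<longleftrightarrow>
     \<pi> \<subseteq> XT \<times> XS \<and> (\<forall>\<sigma>\<in>SigT. \<pi> `` \<sigma> \<in> SigS) \<and>
     (\<forall>x\<in>XT. \<forall>s\<in>PiE (\<pi> `` {x}) OS. \<alpha> x s \<in> OT x)"

text \<open>Action of a deterministic procedure: (Emp f e)_\<sigma> = (\<alpha>_\<sigma>)_* e_{\<pi>(\<sigma>)}.\<close>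
definition emp_det :: "('x \<Rightarrow> 'o set) \<Rightarrow> 'y set set \<Rightarrow>
    ('y \<times> 'x) set \<Rightarrow> ('y \<Rightarrow> ('x \<Rightarrow> 'o) \<Rightarrow> 'p) \<Rightarrow>
    ('x set \<Rightarrow> ('x \<Rightarrow> 'o) \<Rightarrow> real) \<Rightarrow> 'y set \<Rightarrow> ('y \<Rightarrow> 'p) \<Rightarrow> real" where
  "emp_det OS SigT \<pi> \<alpha> e = (\<lambda>\<sigma> t. if \<sigma> \<in> SigT then
      sum (e (\<pi> `` \<sigma>))
        {s \<in> PiE (\<pi> `` \<sigma>) OS. (\<lambda>x\<in>\<sigma>. \<alpha> x (restrict s (\<pi> `` {x}))) = t}
    else 0)"

text \<open>Probabilistic procedures: finitely supported distributions on deterministic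
procedures, given as a list of m weighted procedures (r i, f i), i < m.\<close>
definition prob_proc :: "'x set \<Rightarrow> ('x \<Rightarrow> 'o set) \<Rightarrow> 'x set set \<Rightarrow>
    'y set \<Rightarrow> ('y \<Rightarrow> 'p set) \<Rightarrow> 'y set set \<Rightarrow>
    nat \<Rightarrow> (nat \<Rightarrow> real) \<Rightarrow> (nat \<Rightarrow> ('y \<times> 'x) set \<times> ('y \<Rightarrow> ('x \<Rightarrow> 'o) \<Rightarrow> 'p)) \<Rightarrow> bool" where
  "prob_proc XS OS SigS XT OT SigT m r f \<longleftrightarrow>
     (\<forall>i<m. 0 \<le> r i) \<and> (\<Sum>i<m. r i) = 1 \<and>
     (\<forall>i<m. det_proc XS OS SigS XT OT SigT (fst (f i)) (snd (f i)))"

definition emp_prob :: "('x \<Rightarrow> 'o set) \<Rightarrow> 'y set set \<Rightarrow>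
    nat \<Rightarrow> (nat \<Rightarrow> real) \<Rightarrow> (nat \<Rightarrow> ('y \<times> 'x) set \<times> ('y \<Rightarrow> ('x \<Rightarrow> 'o) \<Rightarrow> 'p)) \<Rightarrow>
    ('x set \<Rightarrow> ('x \<Rightarrow> 'o) \<Rightarrow> real) \<Rightarrow> 'y set \<Rightarrow> ('y \<Rightarrow> 'p) \<Rightarrow> real" where
  "emp_prob OS SigT m r f e = (\<lambda>\<sigma> t. \<Sum>i<m. r i * emp_det OS SigT (fst (f i)) (snd (f i)) e \<sigma> t)"

text \<open>The scenario bold-n: one measurement (the unit value), outcomes {0..<n}, contexts Pow UNIV.\<close>
definition n_X :: "unit set" where "n_X = UNIV"
definition n_O :: "nat \<Rightarrow> unit \<Rightarrow> nat set" where "n_O n = (\<lambda>_. {0..<n})"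
definition n_Sig :: "unit set set" where "n_Sig = Pow UNIV"

definition emp_n_to_dist :: "(unit set \<Rightarrow> (unit \<Rightarrow> nat) \<Rightarrow> real) \<Rightarrow> nat \<Rightarrow> real" where
  "emp_n_to_dist d = (\<lambda>k. d UNIV (restrict (\<lambda>_. k) UNIV))"

definition dist_n :: "nat \<Rightarrow> (nat \<Rightarrow> real) \<Rightarrow> bool" where
  "dist_n n p \<longleftrightarrow> (\<forall>k. 0 \<le> p k) \<and> (\<forall>k\<ge>n. p k = 0) \<and> (\<Sum>k<n. p k) = 1"

definition factors_through :: "'x set \<Rightarrow> ('x \<Rightarrow> 'o set) \<Rightarrow> (('x \<Rightarrow> 'o) \<Rightarrow> 'a) \<Rightarrow> 'x set \<Rightarrow> bool" where
  "factors_through X Out G U \<longleftrightarrow> (\<exists>H. \<forall>s\<in>PiE X Out. G s = H (restrict s U))"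

definition least_factor_set :: "'x set \<Rightarrow> ('x \<Rightarrow> 'o set) \<Rightarrow> (('x \<Rightarrow> 'o) \<Rightarrow> 'a) \<Rightarrow> 'x set" where
  "least_factor_set X Out G = (THE U. U \<subseteq> X \<and> factors_through X Out G U \<and>
      (\<forall>V. V \<subseteq> X \<and> factors_through X Out G V \<longrightarrow> U \<subseteq> V))"

end

theory Submission
  imports Defs
begin

text \<open>
  An empirical model need not be a mixture of deterministic models, but it is always an
  affine combination of them: some signed weighting of the global sections has the given
  marginal on every context. It is built context by context in order of increasing size;
  the marginal on a new context is corrected by a term carried by the global sections that
  agree with a fixed one off that context, and this term has vanishing marginals on all
  smaller contexts. A map preserving convex combinations also preserves affine combinations
  that stay in its domain, so F is determined by the values F(\<delta>_s). When these are mixtures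
  of point masses at F_j(s) with each F_j reading a context U_j, summing over the global
  sections turns F(e) into the mixture of the push-forwards of the marginals e_{U_j}, which is
  the action of the procedures that read U_j. Conversely, a procedure into a single
  measurement reads a single context, so its outcome as a function of the global section
  factors through that context.
\<close>

lemma scenarioD:
  assumes "scenario X Out Sig"
  shows "finite X" and "\<And>x. x \<in> X \<Longrightarrow> finite (Out x)" and "\<And>x. x \<in> X \<Longrightarrow> Out x \<noteq> {}"
    and "Sig \<subseteq> Pow X" and "{} \<in> Sig" and "\<And>\<sigma> \<tau>. \<sigma> \<in> Sig \<Longrightarrow> \<tau> \<subseteq> \<sigma> \<Longrightarrow> \<tau> \<in> Sig"
  using assms unfolding scenario_def simplicial_complex_def by auto

lemma scenario_sections_nonempty: "scenario X Out Sig \<Longrightarrow> PiE X Out \<noteq> {}"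
  using scenarioD(3) by (fastforce simp: PiE_eq_empty_iff)

lemma scenario_finite_sections:
  assumes "scenario X Out Sig" and "U \<subseteq> X"
  shows "finite (PiE U Out)"
  using scenarioD(1,2)[OF assms(1)] assms(2) by (intro finite_PiE) (auto intro: finite_subset)

lemma restrict_in_PiE_subset: "s \<in> PiE X Out \<Longrightarrow> U \<subseteq> X \<Longrightarrow> restrict s U \<in> PiE U Out"
  by (auto simp: PiE_iff)

lemma override_on_in_PiE:
  "oo \<in> PiE X Out \<Longrightarrow> u \<in> PiE U Out \<Longrightarrow> U \<subseteq> X \<Longrightarrow> override_on oo u U \<in> PiE X Out"
  by (auto simp: PiE_iff extensional_def override_on_def)

lemma restrict_override_on: "u \<in> PiE U Out \<Longrightarrow> restrict (override_on oo u U) U = u"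
  by (auto simp: fun_eq_iff PiE_iff extensional_def)

subsection \<open>Factorization through a set of measurements\<close>

lemma factors_through_iff:
  "factors_through X Out G U \<longleftrightarrow>
     (\<forall>s\<in>PiE X Out. \<forall>t\<in>PiE X Out. restrict s U = restrict t U \<longrightarrow> G s = G t)"
proof
  assume "factors_through X Out G U"
  then obtain H where "\<forall>s\<in>PiE X Out. G s = H (restrict s U)"
    unfolding factors_through_def by blast
  then show "\<forall>s\<in>PiE X Out. \<forall>t\<in>PiE X Out. restrict s U = restrict t U \<longrightarrow> G s = G t"
    by simp
next
  assume G: "\<forall>s\<in>PiE X Out. \<forall>t\<in>PiE X Out. restrict s U = restrict t U \<longrightarrow> G s = G t"
  define H where "H u = G (SOME s. s \<in> PiE X Out \<and> restrict s U = u)" for u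
  have "G s = H (restrict s U)" if s: "s \<in> PiE X Out" for s
  proof -
    let ?s' = "SOME s'. s' \<in> PiE X Out \<and> restrict s' U = restrict s U"
    have "?s' \<in> PiE X Out \<and> restrict ?s' U = restrict s U"
      by (rule someI[of _ s]) (use s in simp)
    then have "G ?s' = G s"
      using G s by blast
    then show ?thesis
      unfolding H_def by simp
  qed
  then show "factors_through X Out G U"
    unfolding factors_through_def by (intro exI[of _ H]) blast
qed

lemma factors_through_Int:
  assumes U: "factors_through X Out G U" and V: "factors_through X Out G V"
  shows "factors_through X Out G (U \<inter> V)"
  unfolding factors_through_iff
proof (intro ballI impI)
  fix s t assume s: "s \<in> PiE X Out" and t: "t \<in> PiE X Out"
    and st: "restrict s (U \<inter> V) = restrict t (U \<inter> V)"
  define w where "w = override_on t s U"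
  have w: "w \<in> PiE X Out"
    using s t by (auto simp: PiE_iff w_def extensional_def override_on_def)
  have "restrict w U = restrict s U"
    by (auto simp: w_def)
  then have "G w = G s"
    using U w s unfolding factors_through_iff by blast
  moreover have "restrict w V = restrict t V"
  proof (rule restrict_ext)
    fix x assume "x \<in> V"
    then show "w x = t x"
      using fun_cong[OF st, of x] by (cases "x \<in> U") (auto simp: w_def)
  qed
  then have "G w = G t"
    using V w t unfolding factors_through_iff by blast
  ultimately show "G s = G t"
    by simp
qed

lemma least_factor_set:
  assumes "finite X"
  shows "least_factor_set X Out G \<subseteq> X"
    and "factors_through X Out G (least_factor_set X Out G)"
    and "\<And>V. V \<subseteq> X \<Longrightarrow> factors_through X Out G V \<Longrightarrow> least_factor_set X Out G \<subseteq> V"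
proof -
  define P where "P V \<longleftrightarrow> V \<subseteq> X \<and> factors_through X Out G V" for V
  have "P X"
    unfolding P_def factors_through_def by (auto intro!: exI[of _ G])
  then obtain U where PU: "P U" and min: "\<And>V. P V \<Longrightarrow> card U \<le> card V"
    using ex_has_least_nat[of P X card] by blast
  have least: "U \<subseteq> V" if PV: "P V" for V
  proof (rule ccontr)
    assume "\<not> U \<subseteq> V"
    moreover have "finite U"
      using PU assms unfolding P_def by (blast intro: finite_subset)
    ultimately have "card (U \<inter> V) < card U"
      by (intro psubset_card_mono) auto
    moreover have "P (U \<inter> V)"
      using PU PV factors_through_Int unfolding P_def by blast
    ultimately show False
      using min by (meson not_le)
  qed
  have "least_factor_set X Out G = U"
    unfolding least_factor_set_def
  proof (rule the_equality)
    show "U \<subseteq> X \<and> factors_through X Out G U \<and> (\<forall>V. V \<subseteq> X \<and> factors_through X Out G V \<longrightarrow> U \<subseteq> V)"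
      using PU least unfolding P_def by blast
  next
    fix W assume W: "W \<subseteq> X \<and> factors_through X Out G W \<and> (\<forall>V. V \<subseteq> X \<and> factors_through X Out G V \<longrightarrow> W \<subseteq> V)"
    then have "W \<subseteq> U"
      using PU unfolding P_def by blast
    moreover have "U \<subseteq> W"
      using W least unfolding P_def by blast
    ultimately show "W = U" ..
  qed
  with PU least show "least_factor_set X Out G \<subseteq> X" "factors_through X Out G (least_factor_set X Out G)"
    "\<And>V. V \<subseteq> X \<Longrightarrow> factors_through X Out G V \<Longrightarrow> least_factor_set X Out G \<subseteq> V"
    unfolding P_def by simp_all
qed

lemma least_factor_set_in_complex:
  assumes "scenario X Out Sig" and "U \<in> Sig" and "factors_through X Out G U"
  shows "least_factor_set X Out G \<in> Sig"
proof -
  have "least_factor_set X Out G \<subseteq> U"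
    using assms scenarioD(4)[OF assms(1)] by (intro least_factor_set(3)[OF scenarioD(1)[OF assms(1)]]) auto
  then show ?thesis
    by (rule scenarioD(6)[OF assms(1,2)])
qed

lemma factor_values_in:
  assumes "PiE X Out \<noteq> {}" and "U \<subseteq> X"
    and G: "\<forall>s\<in>PiE X Out. G s = H (restrict s U)" and A: "\<forall>s\<in>PiE X Out. G s \<in> A"
    and t: "t \<in> PiE U Out"
  shows "H t \<in> A"
proof -
  obtain oo where oo: "oo \<in> PiE X Out"
    using assms(1) by blast
  have s: "override_on oo t U \<in> PiE X Out"
    using override_on_in_PiE[OF oo t assms(2)] .
  then have "G (override_on oo t U) = H t"
    using G restrict_override_on[OF t] by simp
  then show ?thesis
    using A s by force
qed

subsection \<open>Empirical models and their signed extensions\<close>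

lemma emp_modelD:
  assumes "emp_model X Out Sig e"
  shows "\<sigma> \<notin> Sig \<Longrightarrow> e \<sigma> s = 0"
    and "\<sigma> \<in> Sig \<Longrightarrow> s \<notin> PiE \<sigma> Out \<Longrightarrow> e \<sigma> s = 0"
    and "\<sigma> \<in> Sig \<Longrightarrow> s \<in> PiE \<sigma> Out \<Longrightarrow> 0 \<le> e \<sigma> s"
    and "\<sigma> \<in> Sig \<Longrightarrow> sum (e \<sigma>) (PiE \<sigma> Out) = 1"
    and "\<sigma> \<in> Sig \<Longrightarrow> \<tau> \<subseteq> \<sigma> \<Longrightarrow> t \<in> PiE \<tau> Out \<Longrightarrow>
      e \<tau> t = sum (e \<sigma>) {s \<in> PiE \<sigma> Out. restrict s \<tau> = t}"
proof -
  note D = assms[unfolded emp_model_def]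
  show "\<sigma> \<notin> Sig \<Longrightarrow> e \<sigma> s = 0"
    and "\<sigma> \<in> Sig \<Longrightarrow> s \<notin> PiE \<sigma> Out \<Longrightarrow> e \<sigma> s = 0"
    and "\<sigma> \<in> Sig \<Longrightarrow> s \<in> PiE \<sigma> Out \<Longrightarrow> 0 \<le> e \<sigma> s"
    and "\<sigma> \<in> Sig \<Longrightarrow> sum (e \<sigma>) (PiE \<sigma> Out) = 1"
    using conjunct1[OF D] conjunct1[OF conjunct2[OF D]] by blast+
  show "\<sigma> \<in> Sig \<Longrightarrow> \<tau> \<subseteq> \<sigma> \<Longrightarrow> t \<in> PiE \<tau> Out \<Longrightarrow>
      e \<tau> t = sum (e \<sigma>) {s \<in> PiE \<sigma> Out. restrict s \<tau> = t}"
    using conjunct2[OF conjunct2[OF D]] by blast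
qed

lemma emp_model_convex:
  assumes e1: "emp_model X Out Sig e1" and e2: "emp_model X Out Sig e2"
    and t: "0 \<le> t" "t \<le> 1"
  shows "emp_model X Out Sig (\<lambda>\<sigma> s. t * e1 \<sigma> s + (1 - t) * e2 \<sigma> s)"
  unfolding emp_model_def
proof (intro conjI ballI allI impI)
  fix \<sigma> s assume "\<sigma> \<notin> Sig"
  then show "t * e1 \<sigma> s + (1 - t) * e2 \<sigma> s = 0"
    using emp_modelD(1)[OF e1] emp_modelD(1)[OF e2] by simp
next
  fix \<sigma> s assume "\<sigma> \<in> Sig" "s \<notin> PiE \<sigma> Out"
  then show "t * e1 \<sigma> s + (1 - t) * e2 \<sigma> s = 0"
    using emp_modelD(2)[OF e1] emp_modelD(2)[OF e2] by simp
next
  fix \<sigma> s assume "\<sigma> \<in> Sig" "s \<in> PiE \<sigma> Out"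
  then show "0 \<le> t * e1 \<sigma> s + (1 - t) * e2 \<sigma> s"
    using emp_modelD(3)[OF e1] emp_modelD(3)[OF e2] t by simp
next
  fix \<sigma> assume "\<sigma> \<in> Sig"
  then show "(\<Sum>s\<in>PiE \<sigma> Out. t * e1 \<sigma> s + (1 - t) * e2 \<sigma> s) = 1"
    using emp_modelD(4)[OF e1] emp_modelD(4)[OF e2] by (simp add: sum.distrib flip: sum_distrib_left)
next
  fix \<sigma> \<tau> t' assume a: "\<sigma> \<in> Sig" "\<tau> \<subseteq> \<sigma>" "t' \<in> PiE \<tau> Out"
  show "t * e1 \<tau> t' + (1 - t) * e2 \<tau> t' =
      (\<Sum>s\<in>{s \<in> PiE \<sigma> Out. restrict s \<tau> = t'}. t * e1 \<sigma> s + (1 - t) * e2 \<sigma> s)"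
    unfolding emp_modelD(5)[OF e1 a] emp_modelD(5)[OF e2 a]
    by (simp add: sum.distrib flip: sum_distrib_left)
qed

lemma emp_model_delta_model:
  assumes sc: "scenario X Out Sig" and s: "s \<in> PiE X Out"
  shows "emp_model X Out Sig (delta_model Sig s)"
  unfolding emp_model_def delta_model_def
proof (intro conjI ballI allI impI)
  fix \<sigma> assume \<sigma>: "\<sigma> \<in> Sig"
  then have "\<sigma> \<subseteq> X"
    using scenarioD(4)[OF sc] by blast
  then have fin: "finite (PiE \<sigma> Out)" and r: "restrict s \<sigma> \<in> PiE \<sigma> Out"
    using scenario_finite_sections[OF sc] restrict_in_PiE_subset[OF s] by blast+
  show "(\<Sum>t\<in>PiE \<sigma> Out. if \<sigma> \<in> Sig \<and> t = restrict s \<sigma> then 1 else 0) = (1::real)"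
    using \<sigma> r fin by (simp add: sum.delta)
  show "(if \<sigma> \<in> Sig \<and> u = restrict s \<sigma> then 1 else 0) = (0::real)" if "u \<notin> PiE \<sigma> Out" for u
    using that r by auto
  fix \<tau> t assume \<tau>: "\<tau> \<subseteq> \<sigma>" and t: "t \<in> PiE \<tau> Out"
  have "\<tau> \<in> Sig"
    using scenarioD(6)[OF sc \<sigma> \<tau>] .
  then show "(if \<tau> \<in> Sig \<and> t = restrict s \<tau> then 1 else 0) =
      (\<Sum>u\<in>{u \<in> PiE \<sigma> Out. restrict u \<tau> = t}. if \<sigma> \<in> Sig \<and> u = restrict s \<sigma> then 1 else (0::real))"
    using \<sigma> \<tau> r fin by (auto simp: sum.delta Int_absorb1)
qed auto

definition global_marginal ::
    "'x set \<Rightarrow> ('x \<Rightarrow> 'o set) \<Rightarrow> (('x \<Rightarrow> 'o) \<Rightarrow> real) \<Rightarrow> 'x set \<Rightarrow> ('x \<Rightarrow> 'o) \<Rightarrow> real" where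
  "global_marginal X Out a \<tau> t = sum a {s \<in> PiE X Out. restrict s \<tau> = t}"

definition signed_extension_on :: "'x set \<Rightarrow> ('x \<Rightarrow> 'o set) \<Rightarrow> 'x set set \<Rightarrow>
    (('x \<Rightarrow> 'o) \<Rightarrow> real) \<Rightarrow> ('x set \<Rightarrow> ('x \<Rightarrow> 'o) \<Rightarrow> real) \<Rightarrow> bool" where
  "signed_extension_on X Out K a e \<longleftrightarrow>
     (\<forall>\<tau>\<in>K. \<forall>t\<in>PiE \<tau> Out. e \<tau> t = global_marginal X Out a \<tau> t)"

lemma sum_global_marginal:
  assumes sc: "scenario X Out Sig" and U: "U \<subseteq> X"
  shows "sum (global_marginal X Out a U) {u \<in> PiE U Out. P u} = sum a {s \<in> PiE X Out. P (restrict s U)}"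
proof -
  let ?S = "{s \<in> PiE X Out. P (restrict s U)}" and ?T = "{u \<in> PiE U Out. P u}"
  have fin: "finite ?S" "finite ?T"
    using scenario_finite_sections[OF sc order_refl] scenario_finite_sections[OF sc U] by auto
  have "sum a ?S = (\<Sum>u\<in>?T. sum a {s \<in> ?S. restrict s U = u})"
    by (rule sum.group[symmetric, OF fin]) (use U in \<open>auto simp: PiE_iff\<close>)
  also have "\<dots> = (\<Sum>u\<in>?T. global_marginal X Out a U u)"
    unfolding global_marginal_def by (intro sum.cong refl arg_cong[where f = "sum a"]) auto
  finally show ?thesis
    by simp
qed

lemma signed_extension_sum:
  assumes sc: "scenario X Out Sig" and e: "emp_model X Out Sig e"
    and a: "signed_extension_on X Out Sig a e"
  shows "sum a (PiE X Out) = 1"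
proof -
  have "1 = sum (e {}) (PiE {} Out)"
    using emp_modelD(4)[OF e scenarioD(5)[OF sc]] by simp
  also have "\<dots> = sum (global_marginal X Out a {}) {u \<in> PiE {} Out. True}"
    using a scenarioD(5)[OF sc] unfolding signed_extension_on_def by (intro sum.cong) auto
  also have "\<dots> = sum a {s \<in> PiE X Out. True}"
    by (rule sum_global_marginal[OF sc empty_subsetI])
  finally show ?thesis
    by simp
qed

lemma emp_model_eq_delta_sum:
  assumes sc: "scenario X Out Sig" and e: "emp_model X Out Sig e"
    and a: "signed_extension_on X Out Sig a e"
  shows "e = (\<lambda>\<sigma> t. \<Sum>s\<in>PiE X Out. a s * delta_model Sig s \<sigma> t)"
proof (intro ext)
  fix \<sigma> t
  show "e \<sigma> t = (\<Sum>s\<in>PiE X Out. a s * delta_model Sig s \<sigma> t)"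
  proof (cases "\<sigma> \<in> Sig")
    case False
    then show ?thesis
      using emp_modelD(1)[OF e False] by (simp add: delta_model_def)
  next
    case \<sigma>: True
    have fin: "finite (PiE X Out)"
      using scenario_finite_sections[OF sc order_refl] .
    have "(\<Sum>s\<in>PiE X Out. a s * delta_model Sig s \<sigma> t) =
        (\<Sum>s\<in>PiE X Out. if restrict s \<sigma> = t then a s else 0)"
      by (rule sum.cong) (auto simp: delta_model_def \<sigma>)
    also have "\<dots> = global_marginal X Out a \<sigma> t"
      unfolding global_marginal_def by (rule sum.inter_filter[OF fin, symmetric])
    also have "\<dots> = e \<sigma> t"
    proof (cases "t \<in> PiE \<sigma> Out")
      case True
      then show ?thesis
        using a \<sigma> unfolding signed_extension_on_def by simp
    next
      case False
      have "\<sigma> \<subseteq> X"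
        using \<sigma> scenarioD(4)[OF sc] by blast
      then have none: "{s \<in> PiE X Out. restrict s \<sigma> = t} = {}"
        using False restrict_in_PiE_subset by blast
      show ?thesis
        unfolding global_marginal_def none using emp_modelD(2)[OF e \<sigma> False] by simp
    qed
    finally show ?thesis ..
  qed
qed

lemma restrict_override_on_eq_iff:
  assumes "u \<in> PiE \<sigma> Out" and "t \<in> PiE \<tau> Out"
  shows "restrict (override_on oo u \<sigma>) \<tau> = t \<longleftrightarrow>
    restrict u (\<sigma> \<inter> \<tau>) = restrict t (\<sigma> \<inter> \<tau>) \<and> (\<forall>x\<in>\<tau> - \<sigma>. oo x = t x)"
proof
  assume h: "restrict (override_on oo u \<sigma>) \<tau> = t"
  show "restrict u (\<sigma> \<inter> \<tau>) = restrict t (\<sigma> \<inter> \<tau>) \<and> (\<forall>x\<in>\<tau> - \<sigma>. oo x = t x)"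
  proof
    have eq: "override_on oo u \<sigma> x = t x" if "x \<in> \<tau>" for x
      using fun_cong[OF h, of x] that by simp
    then show "restrict u (\<sigma> \<inter> \<tau>) = restrict t (\<sigma> \<inter> \<tau>)"
      by (intro restrict_ext) (metis IntD1 IntD2 override_on_apply_in)
    show "\<forall>x\<in>\<tau> - \<sigma>. oo x = t x"
      using eq by (metis DiffD1 DiffD2 override_on_apply_notin)
  qed
next
  assume h: "restrict u (\<sigma> \<inter> \<tau>) = restrict t (\<sigma> \<inter> \<tau>) \<and> (\<forall>x\<in>\<tau> - \<sigma>. oo x = t x)"
  show "restrict (override_on oo u \<sigma>) \<tau> = t"
  proof
    fix x
    show "restrict (override_on oo u \<sigma>) \<tau> x = t x"
      using conjunct2[OF h] fun_cong[OF conjunct1[OF h], of x] assms(2)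
      by (cases "x \<in> \<tau>"; cases "x \<in> \<sigma>") (auto simp: PiE_iff extensional_def)
  qed
qed

lemma global_marginal_override_on:
  assumes sc: "scenario X Out Sig" and \<sigma>: "\<sigma> \<subseteq> X" and oo: "oo \<in> PiE X Out"
  shows "global_marginal X Out (\<lambda>s. \<Sum>u\<in>PiE \<sigma> Out. if s = override_on oo u \<sigma> then d u else 0) \<tau> t =
    sum d {u \<in> PiE \<sigma> Out. restrict (override_on oo u \<sigma>) \<tau> = t}"
proof -
  let ?S = "{s \<in> PiE X Out. restrict s \<tau> = t}"
  have finS: "finite ?S" and fin\<sigma>: "finite (PiE \<sigma> Out)"
    using scenario_finite_sections[OF sc order_refl] scenario_finite_sections[OF sc \<sigma>] by auto
  have "global_marginal X Out (\<lambda>s. \<Sum>u\<in>PiE \<sigma> Out. if s = override_on oo u \<sigma> then d u else 0) \<tau> t =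
      (\<Sum>u\<in>PiE \<sigma> Out. \<Sum>s\<in>?S. if s = override_on oo u \<sigma> then d u else 0)"
    unfolding global_marginal_def by (rule sum.swap)
  also have "\<dots> = (\<Sum>u\<in>PiE \<sigma> Out. if restrict (override_on oo u \<sigma>) \<tau> = t then d u else 0)"
    using finS override_on_in_PiE[OF oo _ \<sigma>] by (intro sum.cong refl) (simp add: sum.delta)
  also have "\<dots> = sum d {u \<in> PiE \<sigma> Out. restrict (override_on oo u \<sigma>) \<tau> = t}"
    by (rule sum.inter_filter[OF fin\<sigma>, symmetric])
  finally show ?thesis .
qed

lemma marginal_defect_vanishes:
  assumes sc: "scenario X Out Sig" and e: "emp_model X Out Sig e"
    and \<sigma>: "\<sigma> \<in> Sig" and \<rho>: "\<rho> \<subseteq> \<sigma>" and t: "t \<in> PiE \<rho> Out"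
    and agree: "e \<rho> t = global_marginal X Out a \<rho> t"
  shows "sum (\<lambda>u. e \<sigma> u - global_marginal X Out a \<sigma> u) {u \<in> PiE \<sigma> Out. restrict u \<rho> = t} = 0"
proof -
  have \<sigma>X: "\<sigma> \<subseteq> X"
    using \<sigma> scenarioD(4)[OF sc] by blast
  have "sum (global_marginal X Out a \<sigma>) {u \<in> PiE \<sigma> Out. restrict u \<rho> = t} =
      sum a {s \<in> PiE X Out. restrict (restrict s \<sigma>) \<rho> = t}"
    by (rule sum_global_marginal[OF sc \<sigma>X])
  also have "\<dots> = global_marginal X Out a \<rho> t"
    using \<rho> unfolding global_marginal_def by (simp add: Int_absorb1)
  finally show ?thesis
    using emp_modelD(5)[OF e \<sigma> \<rho> t] agree by (simp add: sum_subtractf)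
qed

lemma signed_extension_insert:
  assumes sc: "scenario X Out Sig" and e: "emp_model X Out Sig e" and \<sigma>: "\<sigma> \<in> Sig"
    and K: "\<And>\<tau>. \<tau> \<in> K \<Longrightarrow> \<sigma> \<inter> \<tau> \<in> K"
    and a': "signed_extension_on X Out K a' e"
  shows "\<exists>a. signed_extension_on X Out (insert \<sigma> K) a e"
proof -
  have \<sigma>X: "\<sigma> \<subseteq> X"
    using \<sigma> scenarioD(4)[OF sc] by blast
  obtain oo where oo: "oo \<in> PiE X Out"
    using scenario_sections_nonempty[OF sc] by blast
  \<comment> \<open>The defect d of a' on \<sigma> is placed on the global sections agreeing with oo off \<sigma>;
    there it repairs the marginal on \<sigma> without disturbing those on K.\<close>
  define d where "d u = e \<sigma> u - global_marginal X Out a' \<sigma> u" for u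
  define a where "a s = a' s + (\<Sum>u\<in>PiE \<sigma> Out. if s = override_on oo u \<sigma> then d u else 0)" for s
  let ?D = "\<lambda>\<tau> t. {u \<in> PiE \<sigma> Out. restrict (override_on oo u \<sigma>) \<tau> = t}"
  have a_marg: "global_marginal X Out a \<tau> t = global_marginal X Out a' \<tau> t + sum d (?D \<tau> t)" for \<tau> t
    using global_marginal_override_on[OF sc \<sigma>X oo, of d \<tau> t]
    unfolding a_def global_marginal_def by (simp add: sum.distrib)
  have "e \<tau> t = global_marginal X Out a \<tau> t" if \<tau>: "\<tau> \<in> insert \<sigma> K" and t: "t \<in> PiE \<tau> Out" for \<tau> t
  proof (cases "\<tau> = \<sigma>")
    case True
    have "?D \<sigma> t = {t}"
      using t True by (auto simp: restrict_override_on)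
    then show ?thesis
      using True unfolding a_marg d_def by simp
  next
    case False
    then have \<tau>K: "\<tau> \<in> K"
      using \<tau> by blast
    have "sum d (?D \<tau> t) = 0"
    proof (cases "\<forall>x\<in>\<tau> - \<sigma>. oo x = t x")
      case True
      then have "?D \<tau> t = {u \<in> PiE \<sigma> Out. restrict u (\<sigma> \<inter> \<tau>) = restrict t (\<sigma> \<inter> \<tau>)}"
        using restrict_override_on_eq_iff[OF _ t] by blast
      moreover have "restrict t (\<sigma> \<inter> \<tau>) \<in> PiE (\<sigma> \<inter> \<tau>) Out"
        using t by (auto simp: PiE_iff)
      ultimately show ?thesis
        using marginal_defect_vanishes[OF sc e \<sigma> Int_lower1] a' K[OF \<tau>K]
        unfolding d_def signed_extension_on_def by simp
    next
      case False
      then have none: "?D \<tau> t = {}"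
        using restrict_override_on_eq_iff[OF _ t] by blast
      show ?thesis
        unfolding none by simp
    qed
    then show ?thesis
      using a' \<tau>K t unfolding a_marg signed_extension_on_def by simp
  qed
  then show ?thesis
    unfolding signed_extension_on_def by blast
qed

lemma subset_closed_remove_largest:
  assumes closed: "\<forall>\<tau>\<in>insert \<sigma> K. \<forall>\<rho>\<subseteq>\<tau>. \<rho> \<in> insert \<sigma> K" and "\<sigma> \<notin> K"
    and largest: "\<And>\<tau>. \<tau> \<in> K \<Longrightarrow> card \<tau> \<le> card \<sigma>" and fin: "\<And>\<tau>. \<tau> \<in> K \<Longrightarrow> finite \<tau>"
  shows "\<forall>\<tau>\<in>K. \<forall>\<rho>\<subseteq>\<tau>. \<rho> \<in> K"
proof (intro ballI allI impI)
  fix \<tau> \<rho> assume \<tau>: "\<tau> \<in> K" and \<rho>: "\<rho> \<subseteq> \<tau>"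
  have "\<rho> \<noteq> \<sigma>"
  proof
    assume "\<rho> = \<sigma>"
    then have "\<sigma> = \<tau>"
      using \<rho> largest[OF \<tau>] fin[OF \<tau>] card_mono[of \<tau> \<sigma>] by (intro card_subset_eq) auto
    then show False
      using \<open>\<sigma> \<notin> K\<close> \<tau> by blast
  qed
  then show "\<rho> \<in> K"
    using closed \<tau> \<rho> by blast
qed

lemma emp_model_signed_extension:
  assumes sc: "scenario X Out Sig" and e: "emp_model X Out Sig e"
  obtains a where "signed_extension_on X Out Sig a e"
proof -
  have fin_ctx: "finite \<tau>" if "\<tau> \<in> Sig" for \<tau>
    using that scenarioD(1,4)[OF sc] finite_subset by blast
  \<comment> \<open>Contexts are added in order of increasing size, so the family stays closed under subsets.\<close>
  have extend: "\<exists>a. signed_extension_on X Out K a e"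
    if "finite K" and "K \<subseteq> Sig" and "\<forall>\<tau>\<in>K. \<forall>\<rho>\<subseteq>\<tau>. \<rho> \<in> K" for K
    using that
  proof (induction K rule: finite_ranking_induct[where f = card])
    case empty
    show ?case
      by (simp add: signed_extension_on_def)
  next
    case (insert \<sigma> K)
    show ?case
    proof (cases "\<sigma> \<in> K")
      case True
      then show ?thesis
        using insert by (simp add: insert_absorb)
    next
      case False
      have "K \<subseteq> Sig" and \<sigma>: "\<sigma> \<in> Sig"
        using insert.prems(1) by auto
      moreover have closed: "\<forall>\<tau>\<in>K. \<forall>\<rho>\<subseteq>\<tau>. \<rho> \<in> K"
        using subset_closed_remove_largest[OF insert.prems(2) False insert.hyps(2)] fin_ctx
          \<open>K \<subseteq> Sig\<close> by blast
      ultimately obtain a' where a': "signed_extension_on X Out K a' e"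
        using insert.IH by blast
      have "\<sigma> \<inter> \<tau> \<in> K" if "\<tau> \<in> K" for \<tau>
        using closed that by blast
      then show ?thesis
        by (rule signed_extension_insert[OF sc e \<sigma> _ a'])
    qed
  qed
  have "finite Sig"
    using scenarioD(1,4)[OF sc] by (meson finite_Pow_iff finite_subset)
  then have "\<exists>a. signed_extension_on X Out Sig a e"
    by (rule extend[OF _ order_refl]) (use scenarioD(6)[OF sc] in blast)
  then show ?thesis
    using that by blast
qed

subsection \<open>Maps preserving convex combinations\<close>

lemma convex_combination_preserved:
  fixes F :: "('a \<Rightarrow> 'b \<Rightarrow> real) \<Rightarrow> 'c \<Rightarrow> real"
  assumes C: "\<And>x y t. C x \<Longrightarrow> C y \<Longrightarrow> 0 \<le> t \<Longrightarrow> t \<le> 1 \<Longrightarrow> C (\<lambda>\<sigma> s. t * x \<sigma> s + (1 - t) * y \<sigma> s)"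
    and F: "\<And>x y t. C x \<Longrightarrow> C y \<Longrightarrow> 0 \<le> t \<Longrightarrow> t \<le> 1 \<Longrightarrow>
      F (\<lambda>\<sigma> s. t * x \<sigma> s + (1 - t) * y \<sigma> s) = (\<lambda>k. t * F x k + (1 - t) * F y k)"
  shows "finite I \<Longrightarrow> I \<noteq> {} \<Longrightarrow> \<forall>i\<in>I. C (p i) \<Longrightarrow> \<forall>i\<in>I. 0 \<le> w i \<Longrightarrow> sum w I = 1 \<Longrightarrow>
    C (\<lambda>\<sigma> s. \<Sum>i\<in>I. w i * p i \<sigma> s) \<and> F (\<lambda>\<sigma> s. \<Sum>i\<in>I. w i * p i \<sigma> s) = (\<lambda>k. \<Sum>i\<in>I. w i * F (p i) k)"
proof (induction I arbitrary: w rule: finite_ne_induct)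
  case (singleton i)
  then show ?case
    by simp
next
  case (insert i I)
  have wi: "0 \<le> w i" and wI: "sum w I = 1 - w i" and wI0: "0 \<le> sum w I"
    using insert by (auto intro: sum_nonneg)
  show ?case
  proof (cases "w i = 1")
    case True
    then have "\<forall>j\<in>I. w j = 0"
      using wI insert.prems(2) sum_nonneg_eq_0_iff[OF insert.hyps(1)] by auto
    then show ?thesis
      using True insert by (simp add: fun_eq_iff)
  next
    case False
    then have wi1: "w i < 1"
      using wI wI0 by simp
    define v where "v j = w j / (1 - w i)" for j
    have "sum v I = 1"
      using wI wi1 unfolding v_def by (simp flip: sum_divide_distrib)
    moreover have "\<forall>j\<in>I. 0 \<le> v j"
      using insert.prems(2) wi1 unfolding v_def by simp
    ultimately have IH: "C (\<lambda>\<sigma> s. \<Sum>j\<in>I. v j * p j \<sigma> s) \<and>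
        F (\<lambda>\<sigma> s. \<Sum>j\<in>I. v j * p j \<sigma> s) = (\<lambda>k. \<Sum>j\<in>I. v j * F (p j) k)"
      using insert.IH[of v] insert.prems(1) by blast
    have split: "(\<lambda>\<sigma> s. \<Sum>j\<in>insert i I. w j * p j \<sigma> s) =
        (\<lambda>\<sigma> s. w i * p i \<sigma> s + (1 - w i) * (\<Sum>j\<in>I. v j * p j \<sigma> s))"
      "(\<lambda>k. \<Sum>j\<in>insert i I. w j * F (p j) k) = (\<lambda>k. w i * F (p i) k + (1 - w i) * (\<Sum>j\<in>I. v j * F (p j) k))"
      using insert.hyps wi1 unfolding v_def by (simp_all add: fun_eq_iff sum_distrib_left)
    show ?thesis
      unfolding split using C[of "p i", OF _ conjunct1[OF IH] wi] F[of "p i", OF _ conjunct1[OF IH] wi]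
        wi1 IH insert.prems(1) by simp
  qed
qed

lemma affine_weights_as_mixture:
  fixes w :: "'i \<Rightarrow> real"
  assumes I: "finite I" and w: "sum w I = 1" and j: "j \<in> I" "w j < 0"
  obtains c wp wm where "1 < c" and "\<forall>i\<in>I. 0 \<le> wp i" "sum wp I = 1"
    and "\<forall>i\<in>I. 0 \<le> wm i" "sum wm I = 1" and "\<And>i. w i = c * wp i - (c - 1) * wm i"
proof -
  define c where "c = (\<Sum>i\<in>I. max (w i) 0)"
  define neg where "neg = (\<Sum>i\<in>I. max (- w i) 0)"
  have "c - neg = sum w I"
    unfolding c_def neg_def by (simp flip: sum_subtractf) (rule sum.cong; auto)
  then have c: "c = 1 + neg"
    using w by simp
  have neg: "0 < neg"
    unfolding neg_def using j by (intro sum_pos2[OF I]) auto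
  show ?thesis
  proof (rule that[of c "\<lambda>i. max (w i) 0 / c" "\<lambda>i. max (- w i) 0 / neg"])
    show "sum (\<lambda>i. max (w i) 0 / c) I = 1" "sum (\<lambda>i. max (- w i) 0 / neg) I = 1"
      using c neg unfolding c_def neg_def by (simp_all flip: sum_divide_distrib)
    show "w i = c * (max (w i) 0 / c) - (c - 1) * (max (- w i) 0 / neg)" for i
      using c neg by (simp add: max_def)
  qed (use c neg in auto)
qed

lemma affine_combination_preserved:
  fixes F :: "('a \<Rightarrow> 'b \<Rightarrow> real) \<Rightarrow> 'c \<Rightarrow> real"
  assumes C: "\<And>x y t. C x \<Longrightarrow> C y \<Longrightarrow> 0 \<le> t \<Longrightarrow> t \<le> 1 \<Longrightarrow> C (\<lambda>\<sigma> s. t * x \<sigma> s + (1 - t) * y \<sigma> s)"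
    and F: "\<And>x y t. C x \<Longrightarrow> C y \<Longrightarrow> 0 \<le> t \<Longrightarrow> t \<le> 1 \<Longrightarrow>
      F (\<lambda>\<sigma> s. t * x \<sigma> s + (1 - t) * y \<sigma> s) = (\<lambda>k. t * F x k + (1 - t) * F y k)"
    and I: "finite I" "I \<noteq> {}" and p: "\<forall>i\<in>I. C (p i)" and w: "sum w I = 1"
    and Cw: "C (\<lambda>\<sigma> s. \<Sum>i\<in>I. w i * p i \<sigma> s)"
  shows "F (\<lambda>\<sigma> s. \<Sum>i\<in>I. w i * p i \<sigma> s) = (\<lambda>k. \<Sum>i\<in>I. w i * F (p i) k)"
proof (cases "\<forall>i\<in>I. 0 \<le> w i")
  case True
  then show ?thesis
    using convex_combination_preserved[of C F, OF C F I p True w] by blast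
next
  case False
  then obtain j where "j \<in> I" "w j < 0"
    by force
  then obtain c wp wm where c: "1 < c" and wp: "\<forall>i\<in>I. 0 \<le> wp i" "sum wp I = 1"
    and wm: "\<forall>i\<in>I. 0 \<le> wm i" "sum wm I = 1" and w_eq: "\<And>i. w i = c * wp i - (c - 1) * wm i"
    using affine_weights_as_mixture[OF I(1) w] by metis
  let ?e = "\<lambda>\<sigma> s. \<Sum>i\<in>I. w i * p i \<sigma> s"
    and ?\<nu> = "\<lambda>\<sigma> s. \<Sum>i\<in>I. wp i * p i \<sigma> s" and ?\<mu> = "\<lambda>\<sigma> s. \<Sum>i\<in>I. wm i * p i \<sigma> s"
  have \<nu>: "F ?\<nu> = (\<lambda>k. \<Sum>i\<in>I. wp i * F (p i) k)"
    using convex_combination_preserved[of C F, OF C F I p wp] by blast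
  have \<mu>: "C ?\<mu>" "F ?\<mu> = (\<lambda>k. \<Sum>i\<in>I. wm i * F (p i) k)"
    using convex_combination_preserved[of C F, OF C F I p wm] by blast+
  \<comment> \<open>Solving the weight identity for wp exhibits the positive part as a mixture of the
    combination and its negative part.\<close>
  have "wp i = 1 / c * w i + (1 - 1 / c) * wm i" for i
    using c unfolding w_eq by (simp add: field_simps)
  then have "?\<nu> = (\<lambda>\<sigma> s. 1 / c * ?e \<sigma> s + (1 - 1 / c) * ?\<mu> \<sigma> s)"
    by (simp add: fun_eq_iff distrib_right sum.distrib sum_distrib_left mult.assoc)
  moreover have "0 \<le> 1 / c" "1 / c \<le> 1"
    using c by auto
  ultimately have F\<nu>: "F ?\<nu> = (\<lambda>k. 1 / c * F ?e k + (1 - 1 / c) * F ?\<mu> k)"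
    using F[OF Cw \<mu>(1)] by presburger
  show ?thesis
  proof
    fix k
    have "F ?e k = c * F ?\<nu> k - (c - 1) * F ?\<mu> k"
      using fun_cong[OF F\<nu>, of k] c by (simp add: field_simps)
    also have "\<dots> = (\<Sum>i\<in>I. w i * F (p i) k)"
      unfolding \<nu> \<mu>(2) w_eq by (simp add: sum_distrib_left sum_subtractf sum.distrib algebra_simps)
    finally show "F ?e k = (\<Sum>i\<in>I. w i * F (p i) k)" .
  qed
qed

lemma convex_map_eq_delta_sum:
  fixes F :: "('x set \<Rightarrow> ('x \<Rightarrow> 'o) \<Rightarrow> real) \<Rightarrow> 'c \<Rightarrow> real"
  assumes sc: "scenario X Out Sig"
    and F_convex: "\<forall>e1 e2 (t::real). emp_model X Out Sig e1 \<longrightarrow> emp_model X Out Sig e2 \<longrightarrow>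
        0 \<le> t \<longrightarrow> t \<le> 1 \<longrightarrow>
        F (\<lambda>\<sigma> s. t * e1 \<sigma> s + (1 - t) * e2 \<sigma> s) = (\<lambda>k. t * F e1 k + (1 - t) * F e2 k)"
    and e: "emp_model X Out Sig e" and a: "signed_extension_on X Out Sig a e"
  shows "F e = (\<lambda>k. \<Sum>s\<in>PiE X Out. a s * F (delta_model Sig s) k)"
proof -
  have "F (\<lambda>\<sigma> t. \<Sum>s\<in>PiE X Out. a s * delta_model Sig s \<sigma> t) =
      (\<lambda>k. \<Sum>s\<in>PiE X Out. a s * F (delta_model Sig s) k)"
  proof (rule affine_combination_preserved[where C = "emp_model X Out Sig"])
    show "finite (PiE X Out)" and "PiE X Out \<noteq> {}"
      using scenario_finite_sections[OF sc order_refl] scenario_sections_nonempty[OF sc] .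
    show "\<forall>s\<in>PiE X Out. emp_model X Out Sig (delta_model Sig s)"
      using emp_model_delta_model[OF sc] by blast
    show "sum a (PiE X Out) = 1"
      using signed_extension_sum[OF sc e a] .
    show "emp_model X Out Sig (\<lambda>\<sigma> t. \<Sum>s\<in>PiE X Out. a s * delta_model Sig s \<sigma> t)"
      using e emp_model_eq_delta_sum[OF sc e a] by simp
  qed (use emp_model_convex F_convex in blast)+
  then show ?thesis
    using emp_model_eq_delta_sum[OF sc e a] by simp
qed

subsection \<open>Procedures into a single measurement\<close>

definition proc_output :: "(unit \<times> 'x) set \<times> (unit \<Rightarrow> ('x \<Rightarrow> 'o) \<Rightarrow> nat) \<Rightarrow> ('x \<Rightarrow> 'o) \<Rightarrow> nat" where
  "proc_output f s = snd f () (restrict s (fst f `` {()}))"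

lemma emp_det_to_n:
  fixes \<pi> :: "(unit \<times> 'x) set"
  shows "emp_det Out n_Sig \<pi> \<alpha> e UNIV (restrict (\<lambda>_. k) UNIV) =
    sum (e (\<pi> `` {()})) {t \<in> PiE (\<pi> `` {()}) Out. \<alpha> () t = k}"
proof -
  have "\<pi> `` UNIV = \<pi> `` {()}"
    by auto
  moreover have "(\<lambda>x\<in>UNIV. \<alpha> x (restrict t (\<pi> `` {x}))) = restrict (\<lambda>_. k) UNIV \<longleftrightarrow> \<alpha> () t = k"
    if "t \<in> PiE (\<pi> `` {()}) Out" for t
    using that by (auto simp: fun_eq_iff)
  ultimately show ?thesis
    unfolding emp_det_def n_Sig_def by (auto intro!: arg_cong[where f = "sum _"])
qed

lemma emp_det_to_n_eq_sum:
  assumes sc: "scenario X Out Sig" and U: "fst f `` {()} \<in> Sig"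
    and a: "signed_extension_on X Out Sig a e"
  shows "emp_det Out n_Sig (fst f) (snd f) e UNIV (restrict (\<lambda>_. k) UNIV) =
    sum a {s \<in> PiE X Out. proc_output f s = k}"
proof -
  let ?U = "fst f `` {()}"
  have "emp_det Out n_Sig (fst f) (snd f) e UNIV (restrict (\<lambda>_. k) UNIV) =
      sum (global_marginal X Out a ?U) {t \<in> PiE ?U Out. snd f () t = k}"
    unfolding emp_det_to_n using a U unfolding signed_extension_on_def by (intro sum.cong) auto
  also have "\<dots> = sum a {s \<in> PiE X Out. proc_output f s = k}"
    unfolding proc_output_def using U scenarioD(4)[OF sc] by (intro sum_global_marginal[OF sc]) blast
  finally show ?thesis .
qed

lemma emp_prob_to_n:
  assumes sc: "scenario X Out Sig" and ctx: "\<forall>i<m. fst (f i) `` {()} \<in> Sig"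
    and a: "signed_extension_on X Out Sig a e"
  shows "emp_n_to_dist (emp_prob Out n_Sig m r f e) =
    (\<lambda>k. \<Sum>i<m. r i * sum a {s \<in> PiE X Out. proc_output (f i) s = k})"
  unfolding emp_n_to_dist_def emp_prob_def
  using emp_det_to_n_eq_sum[OF sc _ a] ctx by simp

lemma signed_extension_delta_model:
  assumes sc: "scenario X Out Sig" and s: "s \<in> PiE X Out"
  shows "signed_extension_on X Out Sig (\<lambda>s'. if s' = s then 1 else 0) (delta_model Sig s)"
  unfolding signed_extension_on_def global_marginal_def delta_model_def
  using scenario_finite_sections[OF sc order_refl] s by (auto simp: sum.delta')

lemma emp_prob_to_n_delta:
  assumes sc: "scenario X Out Sig" and ctx: "\<forall>i<m. fst (f i) `` {()} \<in> Sig" and s: "s \<in> PiE X Out"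
  shows "emp_n_to_dist (emp_prob Out n_Sig m r f (delta_model Sig s)) =
    (\<lambda>k. \<Sum>i<m. r i * (if proc_output (f i) s = k then 1 else 0))"
  using emp_prob_to_n[OF sc ctx signed_extension_delta_model[OF sc s]] s
    scenario_finite_sections[OF sc order_refl] by (simp add: sum.delta')

lemma det_proc_to_nD:
  assumes "det_proc X Out Sig n_X (n_O n) n_Sig (fst f) (snd f)"
  shows "fst f `` {()} \<in> Sig" and "fst f `` {()} \<subseteq> X"
    and "\<And>t. t \<in> PiE (fst f `` {()}) Out \<Longrightarrow> snd f () t < n"
  using assms unfolding det_proc_def n_X_def n_O_def n_Sig_def by auto

lemma proc_output_less:
  assumes "det_proc X Out Sig n_X (n_O n) n_Sig (fst f) (snd f)" and "s \<in> PiE X Out"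
  shows "proc_output f s < n"
  unfolding proc_output_def
  using det_proc_to_nD[OF assms(1)] restrict_in_PiE_subset[OF assms(2)] by blast

lemma least_factor_set_proc_output:
  assumes "scenario X Out Sig" and "det_proc X Out Sig n_X (n_O n) n_Sig (fst f) (snd f)"
  shows "least_factor_set X Out (proc_output f) \<in> Sig"
  using assms(1) det_proc_to_nD(1)[OF assms(2)]
  by (rule least_factor_set_in_complex) (auto simp: factors_through_def proc_output_def)

lemma proc_output_read_context:
  "proc_output ({()} \<times> U, \<lambda>_. H) s = H (restrict s U)"
  unfolding proc_output_def by (simp add: Image_def)

lemma det_proc_read_context:
  assumes "scenario X Out Sig" and "U \<in> Sig" and "\<forall>t\<in>PiE U Out. H t < n"
  shows "det_proc X Out Sig n_X (n_O n) n_Sig ({()} \<times> U) (\<lambda>_. H)"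
proof -
  have "({()} \<times> U) `` \<sigma> = (if () \<in> \<sigma> then U else {})" for \<sigma> :: "unit set"
    by auto
  then have "({()} \<times> U) `` \<sigma> \<in> Sig" for \<sigma> :: "unit set"
    using assms(2) scenarioD(5)[OF assms(1)] by simp
  moreover have "({()} \<times> U) `` {x} = U" for x :: unit
    by auto
  ultimately show ?thesis
    using assms scenarioD(4)[OF assms(1)]
    unfolding det_proc_def n_X_def n_O_def n_Sig_def by auto
qed

subsection \<open>Characterization of the maps induced by procedures\<close>

lemma ex_positive_reindexing:
  fixes r :: "nat \<Rightarrow> real"
  assumes r: "\<And>i. i < m \<Longrightarrow> 0 \<le> r i"
  obtains m' :: nat and idx where "\<forall>j<m'. idx j < m \<and> 0 < r (idx j)"
    and "\<And>h :: nat \<Rightarrow> real. (\<And>i. i < m \<Longrightarrow> r i = 0 \<Longrightarrow> h i = 0) \<Longrightarrow> (\<Sum>j<m'. h (idx j)) = (\<Sum>i<m. h i)"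
proof -
  let ?P = "{i. i < m \<and> 0 < r i}"
  define xs where "xs = sorted_list_of_set ?P"
  have set_xs: "set xs = ?P" and "distinct xs"
    unfolding xs_def by auto
  have reindex: "(\<Sum>j<length xs. h (xs ! j)) = (\<Sum>i<m. h i)"
    if h: "\<And>i. i < m \<Longrightarrow> r i = 0 \<Longrightarrow> h i = 0" for h :: "nat \<Rightarrow> real"
  proof -
    have "(\<Sum>j<length xs. h (xs ! j)) = sum h ?P"
      using sum.reindex_bij_betw[OF bij_betw_nth[OF \<open>distinct xs\<close> refl set_xs[symmetric]], of h]
      by (simp add: lessThan_atLeast0)
    also have "\<dots> = (\<Sum>i<m. h i)"
      using h r by (intro sum.mono_neutral_left) (auto simp: order.order_iff_strict)
    finally show ?thesis .
  qed
  have "\<forall>j<length xs. xs ! j < m \<and> 0 < r (xs ! j)"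
    using set_xs nth_mem by blast
  then show ?thesis
    using reindex by (rule that)
qed

lemma sum_weighted_indicators:
  fixes a :: "'s \<Rightarrow> real"
  assumes "finite S"
  shows "(\<Sum>s\<in>S. a s * (\<Sum>j<m. r j * (if G j s = k then 1 else 0))) =
    (\<Sum>j<m. r j * sum a {s \<in> S. G j s = k})"
  by (simp add: assms sum_distrib_left sum.swap[of _ S] sum.inter_filter mult.commute
      if_distrib cong: if_cong)

definition delta_decomposition :: "'x set \<Rightarrow> ('x \<Rightarrow> 'o set) \<Rightarrow> 'x set set \<Rightarrow> nat \<Rightarrow>
    (('x set \<Rightarrow> ('x \<Rightarrow> 'o) \<Rightarrow> real) \<Rightarrow> nat \<Rightarrow> real) \<Rightarrow>
    nat \<Rightarrow> (nat \<Rightarrow> real) \<Rightarrow> (nat \<Rightarrow> ('x \<Rightarrow> 'o) \<Rightarrow> nat) \<Rightarrow> bool" where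
  "delta_decomposition X Out Sig n F m r Fs \<longleftrightarrow>
     (\<forall>j<m. 0 < r j) \<and> (\<Sum>j<m. r j) = 1 \<and>
     (\<forall>j<m. \<forall>s\<in>PiE X Out. Fs j s < n) \<and>
     (\<forall>s\<in>PiE X Out. F (delta_model Sig s) = (\<lambda>k. \<Sum>j<m. r j * (if Fs j s = k then 1 else 0))) \<and>
     (\<forall>j<m. least_factor_set X Out (Fs j) \<in> Sig)"

definition induced_by_procedure :: "'x set \<Rightarrow> ('x \<Rightarrow> 'o set) \<Rightarrow> 'x set set \<Rightarrow> nat \<Rightarrow>
    (('x set \<Rightarrow> ('x \<Rightarrow> 'o) \<Rightarrow> real) \<Rightarrow> nat \<Rightarrow> real) \<Rightarrow> nat \<Rightarrow> (nat \<Rightarrow> real) \<Rightarrow>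
    (nat \<Rightarrow> (unit \<times> 'x) set \<times> (unit \<Rightarrow> ('x \<Rightarrow> 'o) \<Rightarrow> nat)) \<Rightarrow> bool" where
  "induced_by_procedure X Out Sig n F m r f \<longleftrightarrow>
     prob_proc X Out Sig n_X (n_O n) n_Sig m r f \<and>
     (\<forall>e. emp_model X Out Sig e \<longrightarrow> F e = emp_n_to_dist (emp_prob Out n_Sig m r f e))"

lemma delta_decomposition_of_procedure:
  assumes sc: "scenario X Out Sig" and ind: "induced_by_procedure X Out Sig n F m r f"
  shows "\<exists>m r Fs. delta_decomposition X Out Sig n F m r Fs"
proof -
  have pp: "prob_proc X Out Sig n_X (n_O n) n_Sig m r f"
    and F: "\<forall>e. emp_model X Out Sig e \<longrightarrow> F e = emp_n_to_dist (emp_prob Out n_Sig m r f e)"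
    using ind unfolding induced_by_procedure_def by auto
  have r0: "\<And>i. i < m \<Longrightarrow> 0 \<le> r i" and rs: "(\<Sum>i<m. r i) = 1"
    and dp: "\<And>i. i < m \<Longrightarrow> det_proc X Out Sig n_X (n_O n) n_Sig (fst (f i)) (snd (f i))"
    using pp unfolding prob_proc_def by auto
  have F\<delta>: "F (delta_model Sig s) = (\<lambda>k. \<Sum>i<m. r i * (if proc_output (f i) s = k then 1 else 0))"
    if s: "s \<in> PiE X Out" for s
    using F emp_model_delta_model[OF sc s] emp_prob_to_n_delta[OF sc _ s] det_proc_to_nD(1)[OF dp] by simp
  obtain m' :: nat and idx where idx: "\<forall>j<m'. idx j < m \<and> 0 < r (idx j)"
    and drop_null: "\<And>h :: nat \<Rightarrow> real. (\<And>i. i < m \<Longrightarrow> r i = 0 \<Longrightarrow> h i = 0) \<Longrightarrow>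
      (\<Sum>j<m'. h (idx j)) = (\<Sum>i<m. h i)"
    using ex_positive_reindexing[of m r, OF r0] by blast
  have "delta_decomposition X Out Sig n F m' (r \<circ> idx) (\<lambda>j. proc_output (f (idx j)))"
    unfolding delta_decomposition_def
  proof (intro conjI allI impI ballI)
    show "(\<Sum>j<m'. (r \<circ> idx) j) = 1"
      using drop_null[of r] rs by simp
    show "F (delta_model Sig s) =
        (\<lambda>k. \<Sum>j<m'. (r \<circ> idx) j * (if proc_output (f (idx j)) s = k then 1 else 0))"
      if "s \<in> PiE X Out" for s
      unfolding F\<delta>[OF that] comp_def by (intro ext drop_null[symmetric]) simp
    fix j assume j: "j < m'"
    then have "idx j < m"
      using idx by blast
    then show "0 < (r \<circ> idx) j" and "least_factor_set X Out (proc_output (f (idx j))) \<in> Sig"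
      and "\<And>s. s \<in> PiE X Out \<Longrightarrow> proc_output (f (idx j)) s < n"
      using idx j least_factor_set_proc_output[OF sc dp] proc_output_less[OF dp] by auto
  qed
  then show ?thesis
    by blast
qed

lemma ex_procedure_with_outputs:
  assumes sc: "scenario X Out Sig" and less: "\<forall>j<m. \<forall>s\<in>PiE X Out. Fs j s < n"
    and ctx: "\<forall>j<m. least_factor_set X Out (Fs j) \<in> Sig"
  obtains f where "\<And>j. j < m \<Longrightarrow> det_proc X Out Sig n_X (n_O n) n_Sig (fst (f j)) (snd (f j))"
    and "\<And>j s. s \<in> PiE X Out \<Longrightarrow> proc_output (f j) s = Fs j s"
proof -
  define U where "U j = least_factor_set X Out (Fs j)" for j
  have "\<forall>j. \<exists>H. \<forall>s\<in>PiE X Out. Fs j s = H (restrict s (U j))"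
    using least_factor_set(2)[OF scenarioD(1)[OF sc]] unfolding U_def factors_through_def by blast
  then obtain H where H: "\<And>j s. s \<in> PiE X Out \<Longrightarrow> Fs j s = H j (restrict s (U j))"
    by metis
  define f where "f j = ({()} \<times> U j, \<lambda>_ :: unit. H j)" for j
  have dp: "det_proc X Out Sig n_X (n_O n) n_Sig (fst (f j)) (snd (f j))" if j: "j < m" for j
    unfolding f_def fst_conv snd_conv
  proof (rule det_proc_read_context[OF sc])
    show "U j \<in> Sig"
      using ctx j unfolding U_def by blast
    then show "\<forall>t\<in>PiE (U j) Out. H j t < n"
      using factor_values_in[OF scenario_sections_nonempty[OF sc], of "U j" "Fs j" "H j" "{..<n}"]
        H less j scenarioD(4)[OF sc] by blast
  qed
  have "proc_output (f j) s = Fs j s" if "s \<in> PiE X Out" for j s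
    unfolding f_def proc_output_read_context H[OF that] ..
  with dp show ?thesis
    by (rule that)
qed

lemma convex_map_eq_emp_prob:
  fixes F :: "('x set \<Rightarrow> ('x \<Rightarrow> 'o) \<Rightarrow> real) \<Rightarrow> nat \<Rightarrow> real"
  assumes sc: "scenario X Out Sig"
    and F_convex: "\<forall>e1 e2 (t::real). emp_model X Out Sig e1 \<longrightarrow> emp_model X Out Sig e2 \<longrightarrow>
        0 \<le> t \<longrightarrow> t \<le> 1 \<longrightarrow>
        F (\<lambda>\<sigma> s. t * e1 \<sigma> s + (1 - t) * e2 \<sigma> s) = (\<lambda>k. t * F e1 k + (1 - t) * F e2 k)"
    and ctx: "\<forall>j<m. fst (f j) `` {()} \<in> Sig"
    and F\<delta>: "\<forall>s\<in>PiE X Out.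
      F (delta_model Sig s) = (\<lambda>k. \<Sum>j<m. r j * (if proc_output (f j) s = k then 1 else 0))"
    and e: "emp_model X Out Sig e"
  shows "F e = emp_n_to_dist (emp_prob Out n_Sig m r f e)"
proof -
  obtain a where a: "signed_extension_on X Out Sig a e"
    using emp_model_signed_extension[OF sc e] .
  have "F e = (\<lambda>k. \<Sum>s\<in>PiE X Out. a s * (\<Sum>j<m. r j * (if proc_output (f j) s = k then 1 else 0)))"
    using convex_map_eq_delta_sum[OF sc F_convex e a] F\<delta> by simp
  also have "\<dots> = (\<lambda>k. \<Sum>j<m. r j * sum a {s \<in> PiE X Out. proc_output (f j) s = k})"
    using scenario_finite_sections[OF sc order_refl] by (simp add: sum_weighted_indicators)
  also have "\<dots> = emp_n_to_dist (emp_prob Out n_Sig m r f e)"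
    using emp_prob_to_n[OF sc ctx a] by simp
  finally show ?thesis .
qed

lemma procedure_of_delta_decomposition:
  fixes F :: "('x set \<Rightarrow> ('x \<Rightarrow> 'o) \<Rightarrow> real) \<Rightarrow> nat \<Rightarrow> real"
  assumes sc: "scenario X Out Sig"
    and F_convex: "\<forall>e1 e2 (t::real). emp_model X Out Sig e1 \<longrightarrow> emp_model X Out Sig e2 \<longrightarrow>
        0 \<le> t \<longrightarrow> t \<le> 1 \<longrightarrow>
        F (\<lambda>\<sigma> s. t * e1 \<sigma> s + (1 - t) * e2 \<sigma> s) = (\<lambda>k. t * F e1 k + (1 - t) * F e2 k)"
    and dec: "delta_decomposition X Out Sig n F m r Fs"
  shows "\<exists>f. induced_by_procedure X Out Sig n F m r f"
proof -
  have r: "\<forall>j<m. 0 < r j" "(\<Sum>j<m. r j) = 1"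
    and less: "\<forall>j<m. \<forall>s\<in>PiE X Out. Fs j s < n"
    and F\<delta>: "\<forall>s\<in>PiE X Out. F (delta_model Sig s) = (\<lambda>k. \<Sum>j<m. r j * (if Fs j s = k then 1 else 0))"
    and ctx: "\<forall>j<m. least_factor_set X Out (Fs j) \<in> Sig"
    using dec unfolding delta_decomposition_def by auto
  obtain f where dp: "\<And>j. j < m \<Longrightarrow> det_proc X Out Sig n_X (n_O n) n_Sig (fst (f j)) (snd (f j))"
    and out: "\<And>j s. s \<in> PiE X Out \<Longrightarrow> proc_output (f j) s = Fs j s"
    using ex_procedure_with_outputs[OF sc less ctx] by blast
  have "prob_proc X Out Sig n_X (n_O n) n_Sig m r f"
    using r dp unfolding prob_proc_def by (auto simp: less_imp_le)
  moreover have "\<forall>j<m. fst (f j) `` {()} \<in> Sig"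
    using det_proc_to_nD(1)[OF dp] by blast
  moreover have "\<forall>s\<in>PiE X Out.
      F (delta_model Sig s) = (\<lambda>k. \<Sum>j<m. r j * (if proc_output (f j) s = k then 1 else 0))"
    using F\<delta> out by simp
  ultimately show ?thesis
    unfolding induced_by_procedure_def using convex_map_eq_emp_prob[OF sc F_convex] by blast
qed

theorem mainTheorem7:
  fixes X :: "'x set" and Out :: "'x \<Rightarrow> 'o set" and Sig :: "'x set set"
    and n :: nat
    and F :: "('x set \<Rightarrow> ('x \<Rightarrow> 'o) \<Rightarrow> real) \<Rightarrow> nat \<Rightarrow> real"
  assumes scen: "scenario X Out Sig"
    and n_pos: "1 \<le> n"
    and F_into: "\<forall>e. emp_model X Out Sig e \<longrightarrow> dist_n n (F e)"
    and F_convex: "\<forall>e1 e2 (t::real). emp_model X Out Sig e1 \<longrightarrow> emp_model X Out Sig e2 \<longrightarrow>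
        0 \<le> t \<longrightarrow> t \<le> 1 \<longrightarrow>
        F (\<lambda>\<sigma> s. t * e1 \<sigma> s + (1 - t) * e2 \<sigma> s) = (\<lambda>k. t * F e1 k + (1 - t) * F e2 k)"
  shows "(\<exists>m r (f :: nat \<Rightarrow> (unit \<times> 'x) set \<times> (unit \<Rightarrow> ('x \<Rightarrow> 'o) \<Rightarrow> nat)).
            prob_proc X Out Sig n_X (n_O n) n_Sig m r f \<and>
            (\<forall>e. emp_model X Out Sig e \<longrightarrow>
                 F e = emp_n_to_dist (emp_prob Out n_Sig m r f e)))
    \<longleftrightarrow>
    (\<exists>m (r :: nat \<Rightarrow> real) (Fs :: nat \<Rightarrow> ('x \<Rightarrow> 'o) \<Rightarrow> nat).
        (\<forall>j<m. 0 < r j) \<and> (\<Sum>j<m. r j) = 1 \<and>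
        (\<forall>j<m. \<forall>s\<in>PiE X Out. Fs j s < n) \<and>
        (\<forall>s\<in>PiE X Out. F (delta_model Sig s) = (\<lambda>k. \<Sum>j<m. r j * (if Fs j s = k then 1 else 0))) \<and>
        (\<forall>j<m. least_factor_set X Out (Fs j) \<in> Sig))"
proof -
  have "(\<exists>m r f. induced_by_procedure X Out Sig n F m r f) \<longleftrightarrow>
      (\<exists>m r Fs. delta_decomposition X Out Sig n F m r Fs)"
    using delta_decomposition_of_procedure[OF scen] procedure_of_delta_decomposition[OF scen F_convex]
    by blast
  then show ?thesis
    unfolding induced_by_procedure_def delta_decomposition_def .
qed

end
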